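(* Let $q:\mathcal U\to\mathbb R^p$ be continuous, differentiable on $\mathrm{Int}(\mathcal U)$, with $Dq$ symmetric and positive definite on $\mathrm{Int}(\mathcal U)$, and with $q(\mathcal U)$ convex. Then $q$ is strictly cyclically monotone on $\mathrm{Int}(\mathcal U)$: for every $k\ge1$ and $u^1,\dots,u^{k+1}\in\mathrm{Int}(\mathcal U)$ with $u^{k+1}=u^1$, $$\sum_{i=1}^k (u^{i+1})^\top\big(q(u^{i+1})-q(u^i)\big)\ge0,$$ and the inequality is strict unless $u^1=\dots=u^k$.
   Context: $\mathcal U\subset\mathbb R^p$ is a compact convex set with nonempty interior. $Dq$ denotes the Jacobian of $q$. *)

theory Defs
  imports "HOL-Analysis.Analysis"
begin

end

theory Submission
  imports Defs "HOL-Complex_Analysis.Cauchy_Integral_Theorem"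
begin

text \<open>
  Since the Jacobian of \<open>q\<close> is symmetric, the integrals of \<open>q\<close> along the edges of any triangle
  in the convex set \<open>Int(U)\<close> sum to zero; as \<open>q\<close> is merely differentiable, this needs Goursat's
  subdivision argument, comparing \<open>q\<close> near each point with the gradient of a quadratic. So the
  integral of \<open>q\<close> along the segment from a base point to \<open>x\<close> is a potential \<open>\<phi>\<close>, and the cyclic
  sum rearranges to \<open>\<Sum>i. \<phi>(u(i+1)) - \<phi>(u i) - q(u i) \<bullet> (u(i+1) - u i)\<close>. With \<open>d = u(i+1) - u i\<close>,
  each term is the integral over \<open>t \<in> [0,1]\<close> of \<open>(q(u i + t d) - q(u i)) \<bullet> d\<close>, which is positive
  for \<open>d \<noteq> 0\<close> because its derivative in \<open>t\<close> is \<open>d \<bullet> Dq d > 0\<close>.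
\<close>

definition segment_integral :: "('a::euclidean_space \<Rightarrow> 'a) \<Rightarrow> 'a \<Rightarrow> 'a \<Rightarrow> real" where
  "segment_integral F x y = integral {0..1} (\<lambda>t. F (x + t *\<^sub>R (y - x)) \<bullet> (y - x))"

lemma segment_point_in_closed_segment:
  assumes "t \<in> {0..1}"
  shows "x + t *\<^sub>R (y - x) \<in> closed_segment x y"
proof -
  have "x + t *\<^sub>R (y - x) = (1 - t) *\<^sub>R x + t *\<^sub>R y"
    by (simp add: algebra_simps)
  then show ?thesis
    using assms unfolding closed_segment_def by auto
qed

lemma continuous_on_segment_integrand:
  assumes "continuous_on (closed_segment x y) F"
  shows "continuous_on {0..1} (\<lambda>t. F (x + t *\<^sub>R (y - x)) \<bullet> (y - x))"
  by (intro continuous_intros continuous_on_compose2[OF assms])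
     (auto simp: segment_point_in_closed_segment)

lemma segment_integral_midpoint:
  assumes "continuous_on (closed_segment x y) F"
  shows "segment_integral F x y = segment_integral F x (midpoint x y) + segment_integral F (midpoint x y) y"
proof -
  define h where "h t = F (x + t *\<^sub>R (y - x)) \<bullet> (y - x)" for t
  have h: "continuous_on {0..1} h"
    unfolding h_def by (rule continuous_on_segment_integrand[OF assms])
  have mid: "midpoint x y = x + (1/2) *\<^sub>R (y - x)"
    unfolding midpoint_def by (simp add: algebra_simps scaleR_2[symmetric] flip: scaleR_add_left)
  have half: "midpoint x y - x = (1/2) *\<^sub>R (y - x)" "y - midpoint x y = (1/2) *\<^sub>R (y - x)"
  proof -
    show "midpoint x y - x = (1/2) *\<^sub>R (y - x)"
      unfolding mid by simp
    moreover have "y - midpoint x y = midpoint x y - x"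
      using midpoint_plus_self[of x y] by (simp add: algebra_simps)
    ultimately show "y - midpoint x y = (1/2) *\<^sub>R (y - x)"
      by simp
  qed
  have "x + t *\<^sub>R (midpoint x y - x) = x + (t/2) *\<^sub>R (y - x)"
       "midpoint x y + t *\<^sub>R (y - midpoint x y) = x + (1/2 + t/2) *\<^sub>R (y - x)" for t
    unfolding half unfolding mid by (simp_all add: scaleR_add_left)
  then have first: "segment_integral F x (midpoint x y) = integral {0..1} (\<lambda>t. (1/2) *\<^sub>R h (t/2))"
    and second: "segment_integral F (midpoint x y) y = integral {0..1} (\<lambda>t. (1/2) *\<^sub>R h (1/2 + t/2))"
    unfolding segment_integral_def h_def half by simp_all
  have lower: "((\<lambda>t. (1/2) *\<^sub>R h (t/2)) has_integral integral {0/2..1/2} h) {0..1}"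
    by (rule has_integral_substitution) (auto intro!: h derivative_eq_intros)
  have upper: "((\<lambda>t. (1/2) *\<^sub>R h (1/2 + t/2)) has_integral integral {1/2 + 0/2..1/2 + 1/2} h) {0..1}"
    by (rule has_integral_substitution) (auto intro!: h derivative_eq_intros)
  have "segment_integral F x y = integral {0..1} h"
    unfolding segment_integral_def h_def ..
  moreover have "integral {0..1/2} h + integral {1/2..1} h = integral {0..1} h"
    by (rule Henstock_Kurzweil_Integration.integral_combine) (auto intro: integrable_continuous_real h)
  ultimately show ?thesis
    unfolding first second integral_unique[OF lower] integral_unique[OF upper] by simp
qed

lemma segment_integral_reverse:
  assumes "continuous_on (closed_segment x y) F"
  shows "segment_integral F y x = - segment_integral F x y"
proof -
  define h where "h t = F (x + t *\<^sub>R (y - x)) \<bullet> (y - x)" for t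
  have "y + t *\<^sub>R (x - y) = x + (1 - t) *\<^sub>R (y - x)" for t
    by (simp add: algebra_simps)
  then have reversed: "segment_integral F y x = integral {0..1} (\<lambda>t. (- 1) *\<^sub>R h (1 - t))"
    unfolding segment_integral_def h_def by (simp flip: inner_minus_right)
  have substituted: "((\<lambda>t. (- 1) *\<^sub>R h (1 - t)) has_integral integral {1 - 0..1 - 1} h - integral {1 - 1..1 - 0} h) {0..1}"
    by (rule has_integral_substitution_general[where g="\<lambda>t. 1 - t" and c=0 and d=1 and s="{}"])
       (auto intro!: derivative_eq_intros continuous_intros
             simp: h_def continuous_on_segment_integrand[OF assms])
  have "segment_integral F x y = integral {0..1} h"
    unfolding segment_integral_def h_def ..
  then show ?thesis
    unfolding reversed integral_unique[OF substituted] by simp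
qed

lemma segment_integral_diff:
  assumes "continuous_on (closed_segment x y) F" "continuous_on (closed_segment x y) G"
  shows "segment_integral (\<lambda>z. F z - G z) x y = segment_integral F x y - segment_integral G x y"
  unfolding segment_integral_def inner_diff_left
  by (intro integral_diff integrable_continuous_real continuous_on_segment_integrand assms)

lemma segment_integral_const: "segment_integral (\<lambda>z. c) x y = c \<bullet> (y - x)"
  unfolding segment_integral_def by simp

lemma abs_segment_integral_le:
  assumes "continuous_on (closed_segment x y) F"
    and "\<And>z. z \<in> closed_segment x y \<Longrightarrow> norm (F z) \<le> B"
  shows "\<bar>segment_integral F x y\<bar> \<le> B * norm (y - x)"
proof -
  have "norm (segment_integral F x y) \<le> B * norm (y - x) * (1 - 0)"
    unfolding segment_integral_def
  proof (rule integral_bound)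
    fix t :: real
    assume "t \<in> {0..1}"
    then have "norm (F (x + t *\<^sub>R (y - x))) \<le> B"
      by (intro assms(2) segment_point_in_closed_segment)
    then show "norm (F (x + t *\<^sub>R (y - x)) \<bullet> (y - x)) \<le> B * norm (y - x)"
      by (metis Cauchy_Schwarz_ineq2 mult_right_mono norm_ge_zero order_trans real_norm_def)
  qed (auto intro: continuous_on_segment_integrand assms(1))
  then show ?thesis
    by simp
qed

lemma segment_integral_gradient:
  assumes "\<And>z. z \<in> closed_segment x y \<Longrightarrow> (\<psi> has_derivative (\<lambda>v. F z \<bullet> v)) (at z)"
  shows "segment_integral F x y = \<psi> y - \<psi> x"
proof -
  have "((\<lambda>t. \<psi> (x + t *\<^sub>R (y - x))) has_vector_derivative F (x + t *\<^sub>R (y - x)) \<bullet> (y - x))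
          (at t within {0..1})" if "t \<in> {0..1}" for t
  proof -
    have "((\<lambda>t. x + t *\<^sub>R (y - x)) has_derivative (\<lambda>s. s *\<^sub>R (y - x))) (at t within {0..1})"
      by (auto intro!: derivative_eq_intros)
    from has_derivative_compose[OF this assms[OF segment_point_in_closed_segment[OF that]]]
    show ?thesis
      unfolding has_real_derivative_iff_has_vector_derivative[symmetric] has_field_derivative_def
      by (rule has_derivative_eq_rhs) (auto simp: o_def)
  qed
  from fundamental_theorem_of_calculus[OF _ this] show ?thesis
    unfolding segment_integral_def by (simp add: integral_unique)
qed

lemma dist_midpoint_midpoint:
  fixes x y z :: "'a::real_normed_vector"
  shows "dist (midpoint x y) (midpoint x z) = dist y z / 2"
    "dist (midpoint y x) (midpoint x z) = dist y z / 2"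
    "dist (midpoint x y) (midpoint z x) = dist y z / 2"
    "dist (midpoint y x) (midpoint z x) = dist y z / 2"
proof -
  have "midpoint x y - midpoint x z = (1/2) *\<^sub>R (y - z)"
    by (simp add: midpoint_def algebra_simps)
  then have "dist (midpoint x y) (midpoint x z) = dist y z / 2"
    unfolding dist_norm by simp
  then show "dist (midpoint x y) (midpoint x z) = dist y z / 2"
    "dist (midpoint y x) (midpoint x z) = dist y z / 2"
    "dist (midpoint x y) (midpoint z x) = dist y z / 2"
    "dist (midpoint y x) (midpoint z x) = dist y z / 2"
    by (simp_all add: midpoint_sym)
qed

text \<open>
  The edge midpoints cut the triangle into four whose triangle sums add up to that of the
  original, so one of them carries at least a quarter of it.
\<close>
lemma triangle_quadrisection:
  fixes L :: "'a::euclidean_space \<Rightarrow> 'a \<Rightarrow> real"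
  assumes S: "convex hull {a,b,c} \<subseteq> S"
    and mid: "\<And>x y. x \<in> S \<Longrightarrow> y \<in> S \<Longrightarrow> L x y = L x (midpoint x y) + L (midpoint x y) y"
    and rev: "\<And>x y. x \<in> S \<Longrightarrow> y \<in> S \<Longrightarrow> L y x = - L x y"
    and dist: "dist a b \<le> K" "dist b c \<le> K" "dist c a \<le> K"
    and large: "e * K\<^sup>2 \<le> \<bar>L a b + L b c + L c a\<bar>"
  obtains a' b' c' where "convex hull {a',b',c'} \<subseteq> convex hull {a,b,c}"
    and "dist a' b' \<le> K/2" "dist b' c' \<le> K/2" "dist c' a' \<le> K/2"
    and "e * (K/2)\<^sup>2 \<le> \<bar>L a' b' + L b' c' + L c' a'\<bar>"
proof -
  define a' where "a' = midpoint b c"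
  define b' where "b' = midpoint c a"
  define c' where "c' = midpoint a b"
  have H: "a \<in> convex hull {a,b,c}" "b \<in> convex hull {a,b,c}" "c \<in> convex hull {a,b,c}"
    by (simp_all add: hull_inc)
  have H': "a' \<in> convex hull {a,b,c}" "b' \<in> convex hull {a,b,c}" "c' \<in> convex hull {a,b,c}"
    unfolding a'_def b'_def c'_def using H by (simp_all add: midpoints_in_convex_hull)
  have sub: "convex hull {x,y,z} \<subseteq> convex hull {a,b,c}"
    if "x \<in> convex hull {a,b,c}" "y \<in> convex hull {a,b,c}" "z \<in> convex hull {a,b,c}" for x y z
    using that by (simp add: convex_hull_subset)
  have "a \<in> S" "b \<in> S" "c \<in> S" "a' \<in> S" "b' \<in> S" "c' \<in> S"
    using H H' S by blast+
  then have split: "L a b + L b c + L c a =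
          (L a c' + L c' b' + L b' a) + (L a' c' + L c' b + L b a') +
          (L a' c + L c b' + L b' a') + (L a' b' + L b' c' + L c' a')"
    using mid[of a b] mid[of b c] mid[of c a] rev[of c' b'] rev[of a' c'] rev[of b' a']
    unfolding a'_def b'_def c'_def by simp
  have "dist a c' \<le> K/2" "dist c' b' \<le> K/2" "dist b' a \<le> K/2"
     "dist a' c' \<le> K/2" "dist c' b \<le> K/2" "dist b a' \<le> K/2"
     "dist a' c \<le> K/2" "dist c b' \<le> K/2" "dist b' a' \<le> K/2"
     "dist a' b' \<le> K/2" "dist b' c' \<le> K/2" "dist c' a' \<le> K/2"
    unfolding a'_def b'_def c'_def using dist
    by (simp_all add: dist_midpoint dist_midpoint_midpoint dist_commute)
  moreover have "e * (K/2)\<^sup>2 \<le> \<bar>L a c' + L c' b' + L b' a\<bar> \<or>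
        e * (K/2)\<^sup>2 \<le> \<bar>L a' c' + L c' b + L b a'\<bar> \<or>
        e * (K/2)\<^sup>2 \<le> \<bar>L a' c + L c b' + L b' a'\<bar> \<or>
        e * (K/2)\<^sup>2 \<le> \<bar>L a' b' + L b' c' + L c' a'\<bar>"
  proof -
    have "e * (K/2)\<^sup>2 = (e * K\<^sup>2) / 4"
      by (simp add: power_divide)
    then show ?thesis
      using large unfolding split by linarith
  qed
  ultimately show ?thesis
    using that sub[OF H(1) H'(3) H'(2)] sub[OF H'(1) H'(3) H(2)] sub[OF H'(1) H(3) H'(2)]
      sub[OF H'(1) H'(2) H'(3)]
    by blast
qed

lemma nested_triangles_common_point:
  fixes fa fb fc :: "nat \<Rightarrow> 'a::euclidean_space"
  assumes nested: "\<And>n. convex hull {fa (Suc n), fb (Suc n), fc (Suc n)} \<subseteq> convex hull {fa n, fb n, fc n}"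
  obtains x where "\<And>n. x \<in> convex hull {fa n, fb n, fc n}"
proof (rule bounded_closed_nest)
  show "closed (convex hull {fa n, fb n, fc n})" for n
    by (simp add: compact_imp_closed finite_imp_compact_convex_hull)
  show "convex hull {fa n, fb n, fc n} \<subseteq> convex hull {fa m, fb m, fc m}" if "m \<le> n" for m n
    using that by (rule transitive_stepwise_le) (auto simp: nested)
qed (auto intro: finite_imp_bounded_convex_hull that)

lemma nested_triangles:
  fixes L :: "'a::euclidean_space \<Rightarrow> 'a \<Rightarrow> real"
  assumes S: "convex hull {a,b,c} \<subseteq> S"
    and mid: "\<And>x y. x \<in> S \<Longrightarrow> y \<in> S \<Longrightarrow> L x y = L x (midpoint x y) + L (midpoint x y) y"
    and rev: "\<And>x y. x \<in> S \<Longrightarrow> y \<in> S \<Longrightarrow> L y x = - L x y"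
    and dist: "dist a b \<le> K" "dist b c \<le> K" "dist c a \<le> K"
    and large: "e * K\<^sup>2 \<le> \<bar>L a b + L b c + L c a\<bar>"
  obtains x where "x \<in> convex hull {a,b,c}"
    and "\<And>n. \<exists>a' b' c'. x \<in> convex hull {a',b',c'} \<and> convex hull {a',b',c'} \<subseteq> S \<and>
           dist a' b' \<le> K/2^n \<and> dist b' c' \<le> K/2^n \<and> dist c' a' \<le> K/2^n \<and>
           e * (K/2^n)\<^sup>2 \<le> \<bar>L a' b' + L b' c' + L c' a'\<bar>"
proof -
  define At where "At x y z n \<longleftrightarrow>
      convex hull {x,y,z} \<subseteq> convex hull {a,b,c} \<and>
      dist x y \<le> K/2^n \<and> dist y z \<le> K/2^n \<and> dist z x \<le> K/2^n \<and>
      e * (K/2^n)\<^sup>2 \<le> \<bar>L x y + L y z + L z x\<bar>"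
    for x y z n
  have start: "At a b c 0"
    using dist large by (simp add: At_def)
  have step: "\<exists>x' y' z'. At x' y' z' (Suc n) \<and> convex hull {x',y',z'} \<subseteq> convex hull {x,y,z}"
    if "At x y z n" for x y z n
  proof -
    have hull: "convex hull {x,y,z} \<subseteq> S"
      using that S unfolding At_def by blast
    have dist: "dist x y \<le> K/2^n" "dist y z \<le> K/2^n" "dist z x \<le> K/2^n"
      and large: "e * (K/2^n)\<^sup>2 \<le> \<bar>L x y + L y z + L z x\<bar>"
      using that unfolding At_def by blast+
    have half: "K/2^n/2 = K/2^Suc n"
      by simp
    obtain x' y' z' where sub: "convex hull {x',y',z'} \<subseteq> convex hull {x,y,z}"
      and "dist x' y' \<le> K/2^Suc n" "dist y' z' \<le> K/2^Suc n" "dist z' x' \<le> K/2^Suc n"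
      and "e * (K/2^Suc n)\<^sup>2 \<le> \<bar>L x' y' + L y' z' + L z' x'\<bar>"
      by (rule triangle_quadrisection[OF hull mid rev dist large, unfolded half])
    moreover have "convex hull {x',y',z'} \<subseteq> convex hull {a,b,c}"
      using sub that unfolding At_def by blast
    ultimately show ?thesis
      unfolding At_def by blast
  qed
  obtain fa fb fc
    where "fa 0 = a" "fb 0 = b" "fc 0 = c"
      and At: "\<And>n. At (fa n) (fb n) (fc n) n"
      and nested: "\<And>n. convex hull {fa (Suc n), fb (Suc n), fc (Suc n)} \<subseteq> convex hull {fa n, fb n, fc n}"
    by (rule Chain3[where Follows = "\<lambda>x' y' z' x y z. convex hull {x',y',z'} \<subseteq> convex hull {x,y,z}",
          OF start step]) blast+
  obtain x where x: "\<And>n. x \<in> convex hull {fa n, fb n, fc n}"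
    by (rule nested_triangles_common_point[of fa fb fc, OF nested]) blast
  show ?thesis
  proof
    show "x \<in> convex hull {a,b,c}"
      using x[of 0] \<open>fa 0 = a\<close> \<open>fb 0 = b\<close> \<open>fc 0 = c\<close> by simp
    show "\<exists>a' b' c'. x \<in> convex hull {a',b',c'} \<and> convex hull {a',b',c'} \<subseteq> S \<and>
           dist a' b' \<le> K/2^n \<and> dist b' c' \<le> K/2^n \<and> dist c' a' \<le> K/2^n \<and>
           e * (K/2^n)\<^sup>2 \<le> \<bar>L a' b' + L b' c' + L c' a'\<bar>" for n
    proof (intro exI conjI)
      show "x \<in> convex hull {fa n, fb n, fc n}" "convex hull {fa n, fb n, fc n} \<subseteq> S"
        using x[of n] At[of n] S unfolding At_def by auto
    qed (use At[of n] in \<open>simp_all add: At_def\<close>)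
  qed
qed

lemma triangle_sum_eq_0:
  fixes L :: "'a::euclidean_space \<Rightarrow> 'a \<Rightarrow> real"
  assumes S: "convex hull {a,b,c} \<subseteq> S"
    and mid: "\<And>x y. x \<in> S \<Longrightarrow> y \<in> S \<Longrightarrow> L x y = L x (midpoint x y) + L (midpoint x y) y"
    and rev: "\<And>x y. x \<in> S \<Longrightarrow> y \<in> S \<Longrightarrow> L y x = - L x y"
    and small: "\<And>p e. p \<in> S \<Longrightarrow> e > 0 \<Longrightarrow> \<exists>k>0. \<forall>a b c.
              dist a b \<le> k \<and> dist b c \<le> k \<and> dist c a \<le> k \<and>
              p \<in> convex hull {a,b,c} \<and> convex hull {a,b,c} \<subseteq> S \<longrightarrow>
              \<bar>L a b + L b c + L c a\<bar> \<le> e * (dist a b + dist b c + dist c a)\<^sup>2"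
  shows "L a b + L b c + L c a = 0"
proof (rule ccontr)
  assume nonzero: "L a b + L b c + L c a \<noteq> 0"
  define K where "K = 1 + max (dist a b) (max (dist b c) (dist c a))"
  define e where "e = \<bar>L a b + L b c + L c a\<bar> / K\<^sup>2"
  have K: "K > 0"
    unfolding K_def by (simp add: add_pos_nonneg max.coboundedI1)
  then have e: "e > 0"
    unfolding e_def using nonzero by simp
  have "dist a b \<le> K" "dist b c \<le> K" "dist c a \<le> K"
    unfolding K_def by auto
  moreover have "e * K\<^sup>2 \<le> \<bar>L a b + L b c + L c a\<bar>"
    unfolding e_def using K by simp
  ultimately obtain x where x: "x \<in> convex hull {a,b,c}"
    and triangles: "\<And>n. \<exists>a' b' c'. x \<in> convex hull {a',b',c'} \<and> convex hull {a',b',c'} \<subseteq> S \<and>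
           dist a' b' \<le> K/2^n \<and> dist b' c' \<le> K/2^n \<and> dist c' a' \<le> K/2^n \<and>
           e * (K/2^n)\<^sup>2 \<le> \<bar>L a' b' + L b' c' + L c' a'\<bar>"
    using nested_triangles[OF S mid rev] by blast
  obtain k where k: "k > 0" and le: "\<And>a' b' c'.
       dist a' b' \<le> k \<and> dist b' c' \<le> k \<and> dist c' a' \<le> k \<and>
       x \<in> convex hull {a',b',c'} \<and> convex hull {a',b',c'} \<subseteq> S \<Longrightarrow>
       \<bar>L a' b' + L b' c' + L c' a'\<bar> \<le> (e/10) * (dist a' b' + dist b' c' + dist c' a')\<^sup>2"
    using small[of x "e/10"] x S e by auto
  obtain n where "K / k < 2 ^ n"
    using real_arch_pow[of 2 "K/k"] by auto
  then have Kn: "K / 2 ^ n < k"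
    using k by (simp add: field_simps)
  obtain a' b' c' where in_hull: "x \<in> convex hull {a',b',c'}" "convex hull {a',b',c'} \<subseteq> S"
    and d: "dist a' b' \<le> K/2^n" "dist b' c' \<le> K/2^n" "dist c' a' \<le> K/2^n"
    and large: "e * (K/2^n)\<^sup>2 \<le> \<bar>L a' b' + L b' c' + L c' a'\<bar>"
    using triangles[of n] by blast
  have "dist a' b' \<le> k" "dist b' c' \<le> k" "dist c' a' \<le> k"
    using d Kn by linarith+
  then have "\<bar>L a' b' + L b' c' + L c' a'\<bar> \<le> (e/10) * (dist a' b' + dist b' c' + dist c' a')\<^sup>2"
    using le in_hull by blast
  also have "\<dots> \<le> (e/10) * (3 * (K/2^n))\<^sup>2"
    using d e by (intro mult_left_mono power_mono) auto
  also have "\<dots> = (9/10) * (e * (K/2^n)\<^sup>2)"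
    by (simp add: power_mult_distrib power_divide)
  also have "\<dots> < e * (K/2^n)\<^sup>2"
    using e K by simp
  finally show False
    using large by simp
qed

lemma has_derivative_quadratic_potential:
  assumes lin: "bounded_linear f'" and sym: "\<And>v w. v \<bullet> f' w = w \<bullet> f' v"
  shows "((\<lambda>z. c \<bullet> z + (1/2) * ((z - p) \<bullet> f' (z - p))) has_derivative (\<lambda>v. (c + f' (z - p)) \<bullet> v)) (at z)"
proof -
  have "((\<lambda>z. c \<bullet> z + (1/2) * ((z - p) \<bullet> f' (z - p))) has_derivative
          (\<lambda>v. c \<bullet> v + (1/2) * (v \<bullet> f' (z - p) + (z - p) \<bullet> f' v))) (at z)"
    by (auto intro!: derivative_eq_intros bounded_linear.has_derivative[OF lin])
  moreover have "c \<bullet> v + (1/2) * (v \<bullet> f' (z - p) + (z - p) \<bullet> f' v) = (c + f' (z - p)) \<bullet> v" for v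
    using sym[of "z - p" v] by (simp add: inner_add_left inner_add_right inner_commute)
  ultimately show ?thesis
    by simp
qed

lemma abs_triangle_sum_le_near_gradient:
  fixes F G :: "'a::euclidean_space \<Rightarrow> 'a"
  assumes cont: "continuous_on (convex hull {a,b,c}) F" "continuous_on (convex hull {a,b,c}) G"
    and grad: "\<And>z. z \<in> convex hull {a,b,c} \<Longrightarrow> (\<psi> has_derivative (\<lambda>v. G z \<bullet> v)) (at z)"
    and near: "\<And>z. z \<in> convex hull {a,b,c} \<Longrightarrow> norm (F z - G z) \<le> B"
  shows "\<bar>segment_integral F a b + segment_integral F b c + segment_integral F c a\<bar>
           \<le> B * (dist a b + dist b c + dist c a)"
proof -
  have edge: "\<bar>segment_integral F x y - (\<psi> y - \<psi> x)\<bar> \<le> B * dist x y"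
    if sub: "closed_segment x y \<subseteq> convex hull {a,b,c}" for x y
  proof -
    have "segment_integral G x y = \<psi> y - \<psi> x"
      using sub grad by (intro segment_integral_gradient) blast
    moreover have "segment_integral (\<lambda>z. F z - G z) x y = segment_integral F x y - segment_integral G x y"
      using cont sub by (intro segment_integral_diff) (auto intro: continuous_on_subset)
    moreover have "\<bar>segment_integral (\<lambda>z. F z - G z) x y\<bar> \<le> B * dist x y"
      using cont sub near
      by (subst dist_commute, unfold dist_norm)
         (intro abs_segment_integral_le continuous_intros; auto intro: continuous_on_subset)
    ultimately show ?thesis
      by simp
  qed
  have "\<bar>segment_integral F a b - (\<psi> b - \<psi> a)\<bar> \<le> B * dist a b"
    "\<bar>segment_integral F b c - (\<psi> c - \<psi> b)\<bar> \<le> B * dist b c"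
    "\<bar>segment_integral F c a - (\<psi> a - \<psi> c)\<bar> \<le> B * dist c a"
    by (simp_all add: edge segments_subset_convex_hull)
  then show ?thesis
    by (simp add: algebra_simps)
qed

text \<open>
  Near a point of differentiability with symmetric derivative, \<open>F\<close> differs from the gradient of
  a quadratic by \<open>o(|z - p|)\<close>, so the triangle sums of \<open>F\<close> are \<open>o(perimeter\<^sup>2)\<close>.
\<close>
lemma segment_integral_triangle_small:
  fixes F :: "'a::euclidean_space \<Rightarrow> 'a"
  assumes cont: "continuous_on S F" and der: "(F has_derivative f') (at p)"
    and sym: "\<And>v w. v \<bullet> f' w = w \<bullet> f' v" and e: "e > 0"
  shows "\<exists>k>0. \<forall>a b c. dist a b \<le> k \<and> dist b c \<le> k \<and> dist c a \<le> k \<and>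
           p \<in> convex hull {a,b,c} \<and> convex hull {a,b,c} \<subseteq> S \<longrightarrow>
           \<bar>segment_integral F a b + segment_integral F b c + segment_integral F c a\<bar>
             \<le> e * (dist a b + dist b c + dist c a)\<^sup>2"
proof -
  from der[unfolded has_derivative_within_alt] e obtain d where lin: "bounded_linear f'" and d: "d > 0"
    and approx: "\<And>y. norm (y - p) < d \<Longrightarrow> norm (F y - F p - f' (y - p)) \<le> e * norm (y - p)"
    by blast
  show ?thesis
  proof (intro exI[of _ "d/2"] conjI allI impI)
    fix a b c
    assume abc: "dist a b \<le> d/2 \<and> dist b c \<le> d/2 \<and> dist c a \<le> d/2 \<and>
              p \<in> convex hull {a,b,c} \<and> convex hull {a,b,c} \<subseteq> S"
    define P where "P = dist a b + dist b c + dist c a"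
    have "\<exists>u\<in>{a,b,c}. \<exists>v\<in>{a,b,c}. \<forall>x\<in>convex hull {a,b,c}. \<forall>y\<in>convex hull {a,b,c}.
            norm (x - y) \<le> norm (u - v)"
      by (rule simplex_extremal_le) auto
    then obtain u v where vertices: "u \<in> {a,b,c}" "v \<in> {a,b,c}"
      and diam: "\<And>x y. x \<in> convex hull {a,b,c} \<Longrightarrow> y \<in> convex hull {a,b,c} \<Longrightarrow> norm (x - y) \<le> norm (u - v)"
      by blast
    have uv: "norm (u - v) \<le> d/2" "norm (u - v) \<le> P"
      using vertices abc d unfolding P_def by (auto simp: dist_norm norm_minus_commute)
    have "\<bar>segment_integral F a b + segment_integral F b c + segment_integral F c a\<bar> \<le> e * P * P"
      unfolding P_def
    proof (rule abs_triangle_sum_le_near_gradient)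
      show "continuous_on (convex hull {a,b,c}) F"
        using cont abc by (blast intro: continuous_on_subset)
      show "continuous_on (convex hull {a,b,c}) (\<lambda>z. F p + f' (z - p))"
        by (intro continuous_intros bounded_linear.continuous_on[OF lin])
      show "((\<lambda>z. F p \<bullet> z + (1/2) * ((z - p) \<bullet> f' (z - p))) has_derivative (\<lambda>v. (F p + f' (z - p)) \<bullet> v)) (at z)"
        for z
        by (rule has_derivative_quadratic_potential[OF lin sym])
      fix z
      assume z: "z \<in> convex hull {a,b,c}"
      then have near: "norm (z - p) \<le> norm (u - v)"
        using diam abc by blast
      then have "norm (F z - (F p + f' (z - p))) \<le> e * norm (z - p)"
        using approx[of z] uv d by (simp add: algebra_simps)
      also have "\<dots> \<le> e * P"
        using near uv e by (intro mult_left_mono) auto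
      finally show "norm (F z - (F p + f' (z - p))) \<le> e * (dist a b + dist b c + dist c a)"
        unfolding P_def .
    qed
    then show "\<bar>segment_integral F a b + segment_integral F b c + segment_integral F c a\<bar>
        \<le> e * (dist a b + dist b c + dist c a)\<^sup>2"
      unfolding P_def by (simp add: power2_eq_square mult.assoc)
  qed (use d in simp)
qed

lemma has_derivative_at_imp_continuous_on:
  assumes "\<And>p. p \<in> S \<Longrightarrow> (F has_derivative F' p) (at p)"
  shows "continuous_on S F"
  using assms by (meson continuous_at_imp_continuous_on has_derivative_continuous)

lemma segment_integral_triangle:
  fixes F :: "'a::euclidean_space \<Rightarrow> 'a"
  assumes S: "convex S"
    and der: "\<And>p. p \<in> S \<Longrightarrow> (F has_derivative F' p) (at p)"
    and sym: "\<And>p v w. p \<in> S \<Longrightarrow> v \<bullet> F' p w = w \<bullet> F' p v"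
    and abc: "a \<in> S" "b \<in> S" "c \<in> S"
  shows "segment_integral F a b + segment_integral F b c + segment_integral F c a = 0"
proof (rule triangle_sum_eq_0[where S = S])
  have cont: "continuous_on S F"
    using der by (rule has_derivative_at_imp_continuous_on)
  show "convex hull {a, b, c} \<subseteq> S"
    using abc S by (simp add: hull_minimal)
  fix x y
  assume "x \<in> S" "y \<in> S"
  then have cs: "continuous_on (closed_segment x y) F"
    using S cont by (meson closed_segment_subset continuous_on_subset)
  show "segment_integral F x y = segment_integral F x (midpoint x y) + segment_integral F (midpoint x y) y"
    by (rule segment_integral_midpoint[OF cs])
  show "segment_integral F y x = - segment_integral F x y"
    by (rule segment_integral_reverse[OF cs])
next
  fix p :: 'a and e :: real
  assume "p \<in> S" "e > 0"
  then show "\<exists>k>0. \<forall>a b c. dist a b \<le> k \<and> dist b c \<le> k \<and> dist c a \<le> k \<and>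
              p \<in> convex hull {a,b,c} \<and> convex hull {a,b,c} \<subseteq> S \<longrightarrow>
              \<bar>segment_integral F a b + segment_integral F b c + segment_integral F c a\<bar>
                \<le> e * (dist a b + dist b c + dist c a)\<^sup>2"
    using segment_integral_triangle_small[OF has_derivative_at_imp_continuous_on[OF der] der sym] by blast
qed

lemma has_real_derivative_inner_increment:
  assumes der: "(F has_derivative F') (at (x + t *\<^sub>R d))"
  shows "((\<lambda>t. (F (x + t *\<^sub>R d) - F x) \<bullet> d) has_real_derivative d \<bullet> F' d) (at t)"
proof -
  have "((\<lambda>t. x + t *\<^sub>R d) has_derivative (\<lambda>s. s *\<^sub>R d)) (at t)"
    by (auto intro!: derivative_eq_intros)
  from has_derivative_compose[OF this der]
  have "((\<lambda>t. F (x + t *\<^sub>R d)) has_derivative (\<lambda>s. F' (s *\<^sub>R d))) (at t)"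
    by (simp add: o_def)
  then have increment: "((\<lambda>t. (F (x + t *\<^sub>R d) - F x) \<bullet> d) has_derivative (\<lambda>s. F' (s *\<^sub>R d) \<bullet> d)) (at t)"
    by (auto intro!: derivative_eq_intros)
  have lin: "linear F'"
    using der has_derivative_linear by blast
  from increment show ?thesis
    unfolding has_field_derivative_def
    by (rule has_derivative_eq_rhs) (simp add: fun_eq_iff linear_scale[OF lin] inner_commute[of d "F' d"])
qed

lemma inner_less_segment_integral:
  fixes F :: "'a::euclidean_space \<Rightarrow> 'a"
  assumes S: "convex S"
    and der: "\<And>p. p \<in> S \<Longrightarrow> (F has_derivative F' p) (at p)"
    and pd: "\<And>p v. p \<in> S \<Longrightarrow> v \<noteq> 0 \<Longrightarrow> v \<bullet> F' p v > 0"
    and xy: "x \<in> S" "y \<in> S" "x \<noteq> y"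
  shows "F x \<bullet> (y - x) < segment_integral F x y"
proof -
  define d where "d = y - x"
  define g where "g t = (F (x + t *\<^sub>R d) - F x) \<bullet> d" for t
  have "d \<noteq> 0"
    using xy(3) unfolding d_def by simp
  have in_S: "x + t *\<^sub>R d \<in> S" if "t \<in> {0..1}" for t
    using segment_point_in_closed_segment[OF that] closed_segment_subset[OF xy(1,2) S]
    unfolding d_def by blast
  have cs: "continuous_on (closed_segment x y) F"
    using closed_segment_subset[OF xy(1,2) S] has_derivative_at_imp_continuous_on[OF der]
    by (rule continuous_on_subset[rotated])
  then have "segment_integral (\<lambda>z. F z - F x) x y = segment_integral F x y - F x \<bullet> (y - x)"
    by (simp add: segment_integral_diff segment_integral_const)
  moreover have "segment_integral (\<lambda>z. F z - F x) x y = integral {0..1} g"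
    unfolding segment_integral_def g_def d_def ..
  ultimately have difference: "segment_integral F x y - F x \<bullet> (y - x) = integral {0..1} g"
    by simp
  have g_cont: "continuous_on {0..1} g"
    unfolding g_def d_def using cs by (intro continuous_on_segment_integrand continuous_intros)
  have deriv: "DERIV g t :> d \<bullet> F' (x + t *\<^sub>R d) d" if "t \<in> {0..1}" for t
    unfolding g_def by (rule has_real_derivative_inner_increment[OF der[OF in_S[OF that]]])
  have increasing: "\<exists>y. DERIV g s :> y \<and> 0 < y" if "0 < s" "s < 1" for s
  proof -
    have "s \<in> {0..1}"
      using that by simp
    then show ?thesis
      using deriv[of s] pd[OF in_S[of s] \<open>d \<noteq> 0\<close>] by blast
  qed
  have g_pos: "0 < g t" if t: "t \<in> {0<..<1}" for t
  proof -
    have cont_t: "continuous_on {0..t} g"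
      using g_cont by (rule continuous_on_subset) (use t in auto)
    have "g 0 < g t"
      by (rule DERIV_pos_imp_increasing_open[of 0 t g]) (use t increasing cont_t in auto)
    then show ?thesis
      by (simp add: g_def)
  qed
  have "0 < integral {0..1} g"
    using integral_less_real[of 0 1 "\<lambda>_. 0" g] g_cont g_pos by simp
  then show ?thesis
    using difference by simp
qed

lemma sum_cycle_eq_0:
  fixes L :: "'a \<Rightarrow> 'a \<Rightarrow> real" and u :: "nat \<Rightarrow> 'a" and k :: nat
  assumes triangle: "\<And>a b c. a \<in> S \<Longrightarrow> b \<in> S \<Longrightarrow> c \<in> S \<Longrightarrow> L a b + L b c + L c a = 0"
    and u: "\<forall>i\<in>{1..k+1}. u i \<in> S" and closed: "u (k+1) = u 1"
  shows "(\<Sum>i=1..k. L (u i) (u (i+1))) = 0"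
proof -
  define p where "p = u 1"
  have p: "p \<in> S"
    using u[rule_format, of 1] unfolding p_def by simp
  have potential: "L x y = L p y - L p x" if "x \<in> S" "y \<in> S" for x y
    using triangle[OF p p p] triangle[OF p that(2) p] triangle[OF p that] by simp
  have "(\<Sum>i=1..k. L (u i) (u (i+1))) = (\<Sum>i=1..k. L p (u (Suc i)) - L p (u i))"
    using u by (intro sum.cong) (auto simp: potential)
  also have "\<dots> = L p (u (Suc k)) - L p (u 1)"
    by (rule sum_Suc_diff) simp
  finally show ?thesis
    using closed by simp
qed

lemma exists_consecutive_neq:
  fixes u :: "nat \<Rightarrow> 'a"
  assumes "\<exists>i\<in>{1..k}. u i \<noteq> u 1"
  shows "\<exists>i\<in>{1..k}. u i \<noteq> u (Suc i)"
proof (rule ccontr)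
  assume "\<not> ?thesis"
  then have "u i = u 1" if "i \<in> {1..k}" for i
    using that by (induction i) (auto simp: le_Suc_eq)
  then show False
    using assms by blast
qed

text \<open>
  The terms \<open>L (u i) (u (i+1)) - F (u i) \<bullet> (u (i+1) - u i)\<close> are the Bregman divergences of the
  potential whose increments are \<open>L\<close>.
\<close>
lemma cyclic_sum_eq_sum_divergences:
  fixes F :: "'a::real_inner \<Rightarrow> 'a" and L :: "'a \<Rightarrow> 'a \<Rightarrow> real" and u :: "nat \<Rightarrow> 'a" and k :: nat
  assumes triangle: "\<And>a b c. a \<in> S \<Longrightarrow> b \<in> S \<Longrightarrow> c \<in> S \<Longrightarrow> L a b + L b c + L c a = 0"
    and u: "\<forall>i\<in>{1..k+1}. u i \<in> S" and closed: "u (k+1) = u 1"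
  shows "(\<Sum>i=1..k. u (i+1) \<bullet> (F (u (i+1)) - F (u i))) =
         (\<Sum>i=1..k. L (u i) (u (i+1)) - F (u i) \<bullet> (u (i+1) - u i))"
proof -
  define \<rho> where "\<rho> j = u j \<bullet> F (u j)" for j
  define D where "D i = L (u i) (u (i+1)) - F (u i) \<bullet> (u (i+1) - u i)" for i
  have "u (i+1) \<bullet> (F (u (i+1)) - F (u i)) = (\<rho> (Suc i) - \<rho> i) + D i - L (u i) (u (i+1))" for i
    unfolding \<rho>_def D_def by (simp add: inner_diff_left inner_diff_right inner_commute)
  then have "(\<Sum>i=1..k. u (i+1) \<bullet> (F (u (i+1)) - F (u i))) =
      (\<Sum>i=1..k. \<rho> (Suc i) - \<rho> i) + (\<Sum>i=1..k. D i) - (\<Sum>i=1..k. L (u i) (u (i+1)))"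
    by (simp only: sum.distrib sum_subtractf)
  also have "(\<Sum>i=1..k. \<rho> (Suc i) - \<rho> i) = 0"
    using closed by (subst sum_Suc_diff) (auto simp: \<rho>_def)
  finally show ?thesis
    unfolding D_def using sum_cycle_eq_0[where L = L, OF triangle u closed] by simp
qed

theorem cyclic_sum_pos_if_symmetric_positive_definite_derivative:
  fixes F :: "'a::euclidean_space \<Rightarrow> 'a" and u :: "nat \<Rightarrow> 'a" and k :: nat
  assumes S: "convex S"
    and der: "\<And>p. p \<in> S \<Longrightarrow> (F has_derivative F' p) (at p)"
    and sym: "\<And>p v w. p \<in> S \<Longrightarrow> v \<bullet> F' p w = w \<bullet> F' p v"
    and pd: "\<And>p v. p \<in> S \<Longrightarrow> v \<noteq> 0 \<Longrightarrow> v \<bullet> F' p v > 0"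
    and u: "\<forall>i\<in>{1..k+1}. u i \<in> S" and closed: "u (k+1) = u 1"
  shows "0 \<le> (\<Sum>i=1..k. u (i+1) \<bullet> (F (u (i+1)) - F (u i)))"
    and "\<exists>i\<in>{1..k}. u i \<noteq> u 1 \<Longrightarrow> 0 < (\<Sum>i=1..k. u (i+1) \<bullet> (F (u (i+1)) - F (u i)))"
proof -
  define D where "D i = segment_integral F (u i) (u (i+1)) - F (u i) \<bullet> (u (i+1) - u i)" for i
  have sum_D: "(\<Sum>i=1..k. u (i+1) \<bullet> (F (u (i+1)) - F (u i))) = (\<Sum>i=1..k. D i)"
    unfolding D_def using segment_integral_triangle[OF S der sym] u closed
    by (intro cyclic_sum_eq_sum_divergences) auto
  have in_S: "u i \<in> S" "u (i+1) \<in> S" if "i \<in> {1..k}" for i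
    using that u[rule_format, of i] u[rule_format, of "i+1"] by auto
  have D_pos: "0 < D i" if "i \<in> {1..k}" "u i \<noteq> u (i+1)" for i
    unfolding D_def using inner_less_segment_integral[OF S der pd in_S[OF that(1)] that(2)] by simp
  have D_nonneg: "0 \<le> D i" if "i \<in> {1..k}" for i
    using D_pos[OF that] by (cases "u i = u (i+1)") (auto simp: D_def segment_integral_def)
  show "0 \<le> (\<Sum>i=1..k. u (i+1) \<bullet> (F (u (i+1)) - F (u i)))"
    unfolding sum_D by (rule sum_nonneg) (rule D_nonneg)
  assume "\<exists>i\<in>{1..k}. u i \<noteq> u 1"
  then obtain i where "i \<in> {1..k}" "u i \<noteq> u (Suc i)"
    using exists_consecutive_neq by blast
  then show "0 < (\<Sum>i=1..k. u (i+1) \<bullet> (F (u (i+1)) - F (u i)))"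
    unfolding sum_D using D_pos D_nonneg by (intro sum_pos2[of _ i]) auto
qed

theorem mainTheorem9:
  fixes U :: "(real ^ 'p) set" and q :: "real ^ 'p \<Rightarrow> real ^ 'p"
  assumes "compact U" and "convex U" and "interior U \<noteq> {}"
    and "continuous_on U q"
    and "\<And>u. u \<in> interior U \<Longrightarrow> q differentiable (at u)"
    and "\<And>u. u \<in> interior U \<Longrightarrow> transpose (jacobian q (at u)) = jacobian q (at u)"
    and "\<And>u v. u \<in> interior U \<Longrightarrow> v \<noteq> 0 \<Longrightarrow> v \<bullet> (jacobian q (at u) *v v) > 0"
    and "convex (q ` U)"
  shows "\<forall>(k::nat) (u::nat \<Rightarrow> real ^ 'p). k \<ge> 1 \<and> (\<forall>i\<in>{1..k+1}. u i \<in> interior U) \<and> u (k+1) = u 1 \<longrightarrow>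
           (\<Sum>i=1..k. u (i+1) \<bullet> (q (u (i+1)) - q (u i))) \<ge> 0 \<and>
           ((\<exists>i\<in>{1..k}. u i \<noteq> u 1) \<longrightarrow> (\<Sum>i=1..k. u (i+1) \<bullet> (q (u (i+1)) - q (u i))) > 0)"
proof (intro allI impI conjI)
  fix k :: nat and u :: "nat \<Rightarrow> real ^ 'p"
  assume "k \<ge> 1 \<and> (\<forall>i\<in>{1..k+1}. u i \<in> interior U) \<and> u (k+1) = u 1"
  then have u: "\<forall>i\<in>{1..k+1}. u i \<in> interior U" and closed: "u (k+1) = u 1"
    by auto
  have der: "(q has_derivative (\<lambda>v. jacobian q (at p) *v v)) (at p)" if "p \<in> interior U" for p
    using assms(5)[OF that] by (simp add: jacobian_works)
  have sym: "v \<bullet> (jacobian q (at p) *v w) = w \<bullet> (jacobian q (at p) *v v)" if "p \<in> interior U" for p v w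
    by (metis assms(6)[OF that] dot_lmul_matrix inner_commute transpose_matrix_vector)
  note cyclic = cyclic_sum_pos_if_symmetric_positive_definite_derivative
    [OF convex_interior[OF assms(2)] der sym assms(7) u closed]
  show "(\<Sum>i=1..k. u (i+1) \<bullet> (q (u (i+1)) - q (u i))) \<ge> 0"
    by (rule cyclic(1))
  show "(\<Sum>i=1..k. u (i+1) \<bullet> (q (u (i+1)) - q (u i))) > 0" if "\<exists>i\<in>{1..k}. u i \<noteq> u 1"
    using cyclic(2) that by blast
qed

end
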